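(* Let $T$ be a (planted) phylogenetic tree with leaf set $L$ and species map $\sigma:L\to\mathscr{S}$. Let $x\in L$, let $s\in\mathscr{S}$ with $s\neq\sigma(x)$, and let $L[s]=\{y\in L:\sigma(y)=s\}$. Let $Y\subseteq L[s]$ contain every best match of $x$ in species $s$, and let $Z\subseteq L$ be a non-empty set of leaves each of which is an outgroup for $Y\cup\{x\}$. Define a digraph $\Gamma$ on vertex set $Y$ as follows: for each pair of distinct $y',y''\in Y$ choose some $z\in Z$ and determine $Q=\overline{T}[x,y',y'',z]$ (which is assumed to be obtained correctly); if $Q\in\{(xz|y'y''),\times\}$ insert both arcs $(y',y'')$ and $(y'',y')$; if $Q=(xy'|y''z)$ insert the arc $(y'',y')$; if $Q=(xy''|y'z)$ insert the arc $(y',y'')$. Then $\Gamma$ has a unique strongly connected component without out-edges, and its vertex set is exactly the set $\{y\in L[s]: x\to y\}$ of best matches of $x$ in species $s$.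
   Context: A planted phylogenetic tree $T$ has a distinguished leaf $0_T$ (planted root) whose unique neighbour $\rho_T$ is the root; every other inner vertex has at least two children; $L$ is the set of leaves other than $0_T$. $a\preceq b$ means $b$ lies on the path from $a$ to $0_T$; $\operatorname{lca}(A)$ is the $\preceq$-minimal vertex above all of $A$. Best match: $y\in L$ is a best match of $x\in L$, written $x\to y$, if $\operatorname{lca}(x,y)\preceq\operatorname{lca}(x,y')$ for all $y'\in L$ with $\sigma(y')=\sigma(y)$. For $L'\subseteq L$ and $z\in L\setminus L'$, $z$ is an outgroup for $L'$ if $\operatorname{lca}(L')\prec\operatorname{lca}(L'\cup\{z\})$. The unrooted tree $\overline{T}$ is obtained from $T$ by deleting $0_T$ and its edge and, if $\rho_T$ has exactly two children, suppressing $\rho_T$. For four leaves $p,q,r,s$, $\overline{T}[p,q,r,s]$ is the subtree of $\overline{T}$ spanned by them with degree-2 vertices suppressed; $\overline{T}[p,q,r,s]=(pq|rs)$ if some edge of it separates $\{p,q\}$ from $\{r,s\}$, and $\overline{T}[p,q,r,s]=\times$ (star tree) if no such separating edge exists for any of the three splits. An arc $(a,b)$ of $\Gamma$ is an out-edge of a strongly connected component $B$ if $a\in B$, $b\notin B$. *)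

theory Defs
  imports Main
begin

text \<open>A planted tree is given by a vertex set V, an arc set E of parent-to-child
arcs, and the planted root r0 (the leaf 0_T).\<close>

definition children :: "('v \<times> 'v) set \<Rightarrow> 'v \<Rightarrow> 'v set" where
  "children E v = {w. (v, w) \<in> E}"

definition planted_phylo_tree :: "'v set \<Rightarrow> ('v \<times> 'v) set \<Rightarrow> 'v \<Rightarrow> bool" where
  "planted_phylo_tree V E r0 \<longleftrightarrow>
     finite V \<and> r0 \<in> V \<and> E \<subseteq> V \<times> V \<and>
     (\<forall>v. (v, r0) \<notin> E) \<and>
     (\<forall>v\<in>V. v \<noteq> r0 \<longrightarrow> (\<exists>!u. (u, v) \<in> E)) \<and>
     (\<forall>v\<in>V. (r0, v) \<in> E\<^sup>*) \<and>
     card (children E r0) = 1 \<and>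
     (\<forall>v\<in>V. v \<noteq> r0 \<longrightarrow> children E v \<noteq> {} \<longrightarrow> card (children E v) \<ge> 2)"

definition root_rho :: "('v \<times> 'v) set \<Rightarrow> 'v \<Rightarrow> 'v" where
  "root_rho E r0 = (THE v. (r0, v) \<in> E)"

definition leaves :: "'v set \<Rightarrow> ('v \<times> 'v) set \<Rightarrow> 'v \<Rightarrow> 'v set" where
  "leaves V E r0 = {v \<in> V. v \<noteq> r0 \<and> children E v = {}}"

text \<open>a \<preceq> b : b lies on the path from a to 0_T, i.e. b is an ancestor of a (or a itself).\<close>
definition anc_le :: "('v \<times> 'v) set \<Rightarrow> 'v \<Rightarrow> 'v \<Rightarrow> bool" where
  "anc_le E a b \<longleftrightarrow> (b, a) \<in> E\<^sup>*"

definition anc_less :: "('v \<times> 'v) set \<Rightarrow> 'v \<Rightarrow> 'v \<Rightarrow> bool" where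
  "anc_less E a b \<longleftrightarrow> anc_le E a b \<and> a \<noteq> b"

definition lca :: "'v set \<Rightarrow> ('v \<times> 'v) set \<Rightarrow> 'v set \<Rightarrow> 'v" where
  "lca V E A = (THE v. v \<in> V \<and> (\<forall>a\<in>A. anc_le E a v) \<and>
                   (\<forall>w\<in>V. (\<forall>a\<in>A. anc_le E a w) \<longrightarrow> anc_le E v w))"

definition best_match :: "'v set \<Rightarrow> ('v \<times> 'v) set \<Rightarrow> 'v \<Rightarrow> ('v \<Rightarrow> 's) \<Rightarrow> 'v \<Rightarrow> 'v \<Rightarrow> bool" where
  "best_match V E r0 \<sigma> x y \<longleftrightarrow> x \<in> leaves V E r0 \<and> y \<in> leaves V E r0 \<and>
     (\<forall>y'\<in>leaves V E r0. \<sigma> y' = \<sigma> y \<longrightarrow> anc_le E (lca V E {x, y}) (lca V E {x, y'}))"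

definition outgroup :: "'v set \<Rightarrow> ('v \<times> 'v) set \<Rightarrow> 'v \<Rightarrow> 'v set \<Rightarrow> 'v \<Rightarrow> bool" where
  "outgroup V E r0 L' z \<longleftrightarrow> L' \<subseteq> leaves V E r0 \<and> z \<in> leaves V E r0 - L' \<and>
     anc_less E (lca V E L') (lca V E (L' \<union> {z}))"

text \<open>Edge set of the unrooted tree Tbar, as a symmetric relation: delete 0_T and its edge;
  if rho_T has exactly two children, suppress rho_T.\<close>
definition tbar_edges :: "('v \<times> 'v) set \<Rightarrow> 'v \<Rightarrow> ('v \<times> 'v) set" where
  "tbar_edges E r0 =
     (let base = {(u, v). (u, v) \<in> E \<and> u \<noteq> r0} \<union> {(v, u). (u, v) \<in> E \<and> u \<noteq> r0};
          \<rho> = root_rho E r0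
      in if card (children E \<rho>) = 2
         then {(u, v). (u, v) \<in> base \<and> u \<noteq> \<rho> \<and> v \<noteq> \<rho>} \<union>
              {(c1, c2). c1 \<in> children E \<rho> \<and> c2 \<in> children E \<rho> \<and> c1 \<noteq> c2}
         else base)"

definition separates :: "('v \<times> 'v) set \<Rightarrow> ('v \<times> 'v) \<Rightarrow> 'v \<Rightarrow> 'v \<Rightarrow> 'v \<Rightarrow> 'v \<Rightarrow> bool" where
  "separates U e p q r s \<longleftrightarrow> e \<in> U \<and>
     (let U' = U - {e, (snd e, fst e)} in
        (p, q) \<in> U'\<^sup>* \<and> (r, s) \<in> U'\<^sup>* \<and> (p, r) \<notin> U'\<^sup>*)"

text \<open>Quartet Tbar[p,q,r,s] = (pq|rs): some edge of the spanned subtree separates {p,q}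
  from {r,s}.  (Every edge of the spanned subtree with degree-2 vertices suppressed
  corresponds to a path of Tbar-edges, each of which separates the same bipartition, and
  edges of Tbar outside the spanned subtree separate no two of the four leaves; so this
  is the same as the existence of a separating edge of Tbar.)\<close>
definition quartet :: "('v \<times> 'v) set \<Rightarrow> 'v \<Rightarrow> 'v \<Rightarrow> 'v \<Rightarrow> 'v \<Rightarrow> 'v \<Rightarrow> bool" where
  "quartet E r0 p q r s \<longleftrightarrow> (\<exists>e. separates (tbar_edges E r0) e p q r s)"

definition quartet_star :: "('v \<times> 'v) set \<Rightarrow> 'v \<Rightarrow> 'v \<Rightarrow> 'v \<Rightarrow> 'v \<Rightarrow> 'v \<Rightarrow> bool" where
  "quartet_star E r0 p q r s \<longleftrightarrow>
     \<not> quartet E r0 p q r s \<and> \<not> quartet E r0 p r q s \<and> \<not> quartet E r0 p s q r"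

text \<open>The digraph Gamma on Y, given the chosen outgroup ch y' y'' for each pair.
  Arc (a,b) is inserted iff Q = (xz|ab), Q = star, or Q = (xb|az).\<close>
definition gamma_arcs :: "('v \<times> 'v) set \<Rightarrow> 'v \<Rightarrow> 'v \<Rightarrow> 'v set \<Rightarrow> ('v \<Rightarrow> 'v \<Rightarrow> 'v) \<Rightarrow> ('v \<times> 'v) set" where
  "gamma_arcs E r0 x Y ch = {(a, b). a \<in> Y \<and> b \<in> Y \<and> a \<noteq> b \<and>
      (quartet E r0 x (ch a b) a b \<or> quartet_star E r0 x a b (ch a b) \<or>
       quartet E r0 x b a (ch a b))}"

definition is_scc :: "'v set \<Rightarrow> ('v \<times> 'v) set \<Rightarrow> 'v set \<Rightarrow> bool" where
  "is_scc W A B \<longleftrightarrow> (\<exists>u\<in>W. B = {v\<in>W. (u, v) \<in> A\<^sup>* \<and> (v, u) \<in> A\<^sup>*})"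

definition has_out_edge :: "('v \<times> 'v) set \<Rightarrow> 'v set \<Rightarrow> bool" where
  "has_out_edge A B \<longleftrightarrow> (\<exists>a b. (a, b) \<in> A \<and> a \<in> B \<and> b \<notin> B)"

end

theory Submission
  imports Defs
begin

text \<open>Call \<open>b\<close> at least as close to \<open>x\<close> as \<open>a\<close> if every common ancestor
  of \<open>x\<close> and \<open>a\<close> is an ancestor of \<open>b\<close>, i.e. \<open>lca(x,b) \<preceq> lca(x,a)\<close>. Since the ancestors of \<open>x\<close>
  form a chain, this is a total preorder, and the best matches of \<open>x\<close> in species \<open>s\<close> are
  its greatest elements in \<open>L[s]\<close>.

  Deleting an edge of the unrooted tree splits the leaves into the cluster of some vertex
  other than \<open>0_T\<close> and \<open>\<rho>_T\<close> and its complement, and every such cluster arises this way.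
  Hence \<open>(pq|rs)\<close> holds iff some cluster separates \<open>{p,q}\<close> from \<open>{r,s}\<close>. If \<open>z\<close> lies outside
  the subtree spanned by \<open>Y \<union> {x}\<close>, this shows that \<open>(xa|bz)\<close> holds iff \<open>b\<close> is not at least
  as close to \<open>x\<close> as \<open>a\<close>, and that \<open>(xz|ab)\<close> implies that it is. So
  \<open>\<Gamma>\<close> has an arc \<open>(a,b)\<close> exactly when \<open>b\<close> is at least as close to \<open>x\<close> as \<open>a\<close>. The
  strongly connected components of such a digraph are the classes of the preorder, and the only
  one without out-edges is the class of greatest elements; as \<open>Y\<close> contains all best matches,
  that class is the set of best matches.\<close>

section \<open>Total preorders and sink components\<close>

definition greatest_elements :: "('a \<Rightarrow> 'a \<Rightarrow> bool) \<Rightarrow> 'a set \<Rightarrow> 'a set" where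
  "greatest_elements le A = {y \<in> A. \<forall>y'\<in>A. le y' y}"

lemma totalp_reflp_cases:
  assumes "reflp le" "totalp le"
  shows "le a b \<or> le b a"
  using assms by (cases "a = b") (auto dest: reflpD totalp_onD)

lemma greatest_elements_nonempty:
  assumes "finite A" "A \<noteq> {}" and le: "reflp le" "transp le" "totalp le"
  shows "greatest_elements le A \<noteq> {}"
  using assms(1,2) unfolding greatest_elements_def
proof (induction rule: finite_ne_induct)
  case (singleton a)
  then show ?case using le(1) by (auto dest: reflpD)
next
  case (insert a F)
  then obtain m where m: "m \<in> F" "\<forall>y\<in>F. le y m" by blast
  show ?case
  proof (cases "le a m")
    case True
    then show ?thesis using m by blast
  next
    case False
    then have "le m a" using totalp_reflp_cases[OF le(1,3)] by blast
    then have "\<forall>y\<in>insert a F. le y a" using m le(1,2) by (auto dest: reflpD transpD)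
    then show ?thesis by blast
  qed
qed

lemma greatest_elements_subset_eq:
  assumes "transp le" "greatest_elements le A \<subseteq> B" "B \<subseteq> A" "greatest_elements le A \<noteq> {}"
  shows "greatest_elements le B = greatest_elements le A"
proof
  obtain m where m: "m \<in> greatest_elements le A" using assms(4) by blast
  show "greatest_elements le B \<subseteq> greatest_elements le A"
  proof
    fix y assume "y \<in> greatest_elements le B"
    then have "y \<in> A" "le m y" using m assms(2,3) unfolding greatest_elements_def by auto
    moreover have "le y' m" if "y' \<in> A" for y'
      using m that unfolding greatest_elements_def by blast
    ultimately show "y \<in> greatest_elements le A"
      using assms(1) unfolding greatest_elements_def by (blast dest: transpD)
  qed
  show "greatest_elements le A \<subseteq> greatest_elements le B"
    using assms(2,3) unfolding greatest_elements_def by blast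
qed

lemma rtrancl_preorder_arcs_iff:
  assumes "reflp le" "transp le"
    and A: "A = {(a, b). a \<in> Y \<and> b \<in> Y \<and> a \<noteq> b \<and> le a b}" and "a \<in> Y" "b \<in> Y"
  shows "(a, b) \<in> A\<^sup>* \<longleftrightarrow> le a b"
proof
  assume "(a, b) \<in> A\<^sup>*"
  then show "le a b"
  proof induction
    case base
    show ?case using \<open>reflp le\<close> by (rule reflpD)
  next
    case (step b c)
    then show ?case using A \<open>transp le\<close> by (blast dest: transpD)
  qed
next
  assume "le a b"
  then show "(a, b) \<in> A\<^sup>*" using assms(4,5) A by (cases "a = b") auto
qed

lemma is_scc_preorder_arcs_iff:
  assumes "reflp le" "transp le"
    and A: "A = {(a, b). a \<in> Y \<and> b \<in> Y \<and> a \<noteq> b \<and> le a b}"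
  shows "is_scc Y A B \<longleftrightarrow> (\<exists>u\<in>Y. B = {v \<in> Y. le u v \<and> le v u})"
proof -
  have "{v \<in> Y. (u, v) \<in> A\<^sup>* \<and> (v, u) \<in> A\<^sup>*} = {v \<in> Y. le u v \<and> le v u}" if "u \<in> Y" for u
    using that rtrancl_preorder_arcs_iff[OF assms] by blast
  then show ?thesis unfolding is_scc_def by (metis (no_types, lifting))
qed

lemma sink_scc_eq_greatest_elements:
  assumes le: "reflp le" "transp le" "totalp le"
    and A: "A = {(a, b). a \<in> Y \<and> b \<in> Y \<and> a \<noteq> b \<and> le a b}"
    and scc: "is_scc Y A B" and sink: "\<not> has_out_edge A B"
  shows "B = greatest_elements le Y"
proof -
  obtain u where u: "u \<in> Y" "B = {v \<in> Y. le u v \<and> le v u}"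
    using scc unfolding is_scc_preorder_arcs_iff[OF le(1,2) A] by blast
  have u_greatest: "le y u" if "y \<in> Y" for y
  proof (rule ccontr)
    assume "\<not> le y u"
    then have "(u, y) \<in> A" using A u(1) that totalp_reflp_cases[OF le(1,3)] by fastforce
    moreover have "u \<in> B" using u le(1) by (auto dest: reflpD)
    ultimately have "y \<in> B" using sink unfolding has_out_edge_def by blast
    with \<open>\<not> le y u\<close> u show False by blast
  qed
  show ?thesis
    using u u_greatest le(2) unfolding greatest_elements_def by (auto dest: transpD)
qed

lemma greatest_elements_sink_scc:
  assumes "finite Y" "Y \<noteq> {}" and le: "reflp le" "transp le" "totalp le"
    and A: "A = {(a, b). a \<in> Y \<and> b \<in> Y \<and> a \<noteq> b \<and> le a b}"
  shows "is_scc Y A (greatest_elements le Y) \<and> \<not> has_out_edge A (greatest_elements le Y)"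
proof
  let ?G = "greatest_elements le Y"
  have le_trans: "le a c" if "le a b" "le b c" for a b c using le(2) that by (rule transpD)
  obtain m where m: "m \<in> ?G" using greatest_elements_nonempty[OF assms(1,2) le] by blast
  then have "?G = {v \<in> Y. le m v \<and> le v m}"
    using le_trans unfolding greatest_elements_def by blast
  then show "is_scc Y A ?G"
    unfolding is_scc_preorder_arcs_iff[OF le(1,2) A] using m unfolding greatest_elements_def by blast
  show "\<not> has_out_edge A ?G"
    using A le_trans unfolding has_out_edge_def greatest_elements_def by blast
qed

lemma unique_sink_scc_total_preorder:
  assumes "finite Y" "Y \<noteq> {}" and le: "reflp le" "transp le" "totalp le"
    and A: "A = {(a, b). a \<in> Y \<and> b \<in> Y \<and> a \<noteq> b \<and> le a b}"
  shows "(\<exists>!B. is_scc Y A B \<and> \<not> has_out_edge A B) \<and>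
         (\<forall>B. is_scc Y A B \<and> \<not> has_out_edge A B \<longrightarrow> B = greatest_elements le Y)"
  using greatest_elements_sink_scc[OF assms] sink_scc_eq_greatest_elements[OF le A] by blast

lemma sym_rtrancl_iff_same_side:
  assumes "sym R" and closed: "R `` D \<subseteq> D"
    and inside: "\<And>p. p \<in> P \<Longrightarrow> p \<in> D \<Longrightarrow> (a, p) \<in> R\<^sup>*"
    and outside: "\<And>p. p \<in> P \<Longrightarrow> p \<notin> D \<Longrightarrow> (b, p) \<in> R\<^sup>*"
    and "p \<in> P" "q \<in> P"
  shows "(p, q) \<in> R\<^sup>* \<longleftrightarrow> (p \<in> D \<longleftrightarrow> q \<in> D)"
proof
  have sym: "sym (R\<^sup>*)" using sym_rtrancl[OF \<open>sym R\<close>] .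
  have "R\<^sup>* `` D = D" using Image_closed_trancl[OF closed] .
  moreover assume "(p, q) \<in> R\<^sup>*"
  moreover from this have "(q, p) \<in> R\<^sup>*" by (rule symD[OF sym])
  ultimately show "p \<in> D \<longleftrightarrow> q \<in> D" by blast
next
  assume "p \<in> D \<longleftrightarrow> q \<in> D"
  then obtain c where "(c, p) \<in> R\<^sup>*" "(c, q) \<in> R\<^sup>*"
    using inside outside \<open>p \<in> P\<close> \<open>q \<in> P\<close> by (cases "p \<in> D") blast+
  then show "(p, q) \<in> R\<^sup>*"
    using symD[OF sym_rtrancl[OF \<open>sym R\<close>]] rtrancl_trans by metis
qed

lemma rtrancl_lift_path:
  assumes "(a, b) \<in> E\<^sup>*"
    and "\<And>u v. (a, u) \<in> E\<^sup>* \<Longrightarrow> (u, v) \<in> E \<Longrightarrow> (v, b) \<in> E\<^sup>* \<Longrightarrow> (u, v) \<in> R"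
  shows "(a, b) \<in> R\<^sup>*"
  using assms
proof (induction rule: rtrancl_induct)
  case (step v w)
  then have "(a, v) \<in> R\<^sup>*" by (meson rtrancl_into_rtrancl)
  moreover have "(v, w) \<in> R" using step by blast
  ultimately show ?case by (rule rtrancl_into_rtrancl)
qed simp

section \<open>Planted trees\<close>

locale planted_tree =
  fixes V :: "'v set" and E :: "('v \<times> 'v) set" and r0 :: 'v
  assumes planted: "planted_phylo_tree V E r0"
begin

abbreviation rho :: 'v where "rho \<equiv> root_rho E r0"

abbreviation L :: "'v set" where "L \<equiv> leaves V E r0"

lemma finite_V: "finite V"
  and r0_in_V: "r0 \<in> V"
  and arc_in_V: "(a, b) \<in> E \<Longrightarrow> a \<in> V \<and> b \<in> V"
  and no_arc_to_r0: "(v, r0) \<notin> E"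
  and unique_parent: "v \<in> V \<Longrightarrow> v \<noteq> r0 \<Longrightarrow> \<exists>!u. (u, v) \<in> E"
  and r0_reaches: "v \<in> V \<Longrightarrow> (r0, v) \<in> E\<^sup>*"
  and card_children_r0: "card (children E r0) = 1"
  using planted unfolding planted_phylo_tree_def by blast+

lemma leavesD: "p \<in> L \<Longrightarrow> p \<in> V \<and> p \<noteq> r0 \<and> (\<forall>w. (p, w) \<notin> E)"
  by (auto simp: leaves_def children_def)

lemma parent_unique: "(u, v) \<in> E \<Longrightarrow> (u', v) \<in> E \<Longrightarrow> u = u'"
  using unique_parent[of v] arc_in_V no_arc_to_r0 by metis

lemma ancestor_in_V: "(a, b) \<in> E\<^sup>* \<Longrightarrow> b \<in> V \<Longrightarrow> a \<in> V"
  by (erule converse_rtranclE) (auto dest: arc_in_V)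

lemma ancestor_of_r0: "(v, r0) \<in> E\<^sup>* \<Longrightarrow> v = r0"
  by (erule rtranclE) (auto simp: no_arc_to_r0)

lemma trancl_irrefl: "(v, v) \<notin> E\<^sup>+"
proof
  assume cycle: "(v, v) \<in> E\<^sup>+"
  have "(w, w) \<notin> E\<^sup>+" if "(r0, w) \<in> E\<^sup>*" for w
    using that
  proof (induction rule: rtrancl_induct)
    case base
    show ?case using no_arc_to_r0 by (auto dest: tranclD2)
  next
    case (step a b)
    show ?case
    proof
      assume "(b, b) \<in> E\<^sup>+"
      then obtain c where c: "(b, c) \<in> E\<^sup>*" "(c, b) \<in> E" by (auto dest: tranclD2)
      then have "c = a" using parent_unique step.hyps(2) by blast
      then have "(a, a) \<in> E\<^sup>+" using c(1) step.hyps(2) by (meson rtrancl_into_trancl2)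
      then show False using step.IH by blast
    qed
  qed
  moreover have "v \<in> V" using cycle by (auto dest: tranclD arc_in_V)
  ultimately show False using cycle r0_reaches by blast
qed

lemma ancestor_antisym: "(a, b) \<in> E\<^sup>* \<Longrightarrow> (b, a) \<in> E\<^sup>* \<Longrightarrow> a = b"
  by (metis trancl_irrefl rtrancl_eq_or_trancl rtrancl_trancl_trancl)

lemma arc_not_ancestor: "(a, b) \<in> E \<Longrightarrow> (b, a) \<notin> E\<^sup>*"
  using trancl_irrefl rtrancl_into_trancl2 by metis

lemma ancestors_comparable: "(u, a) \<in> E\<^sup>* \<Longrightarrow> (w, a) \<in> E\<^sup>* \<Longrightarrow> (u, w) \<in> E\<^sup>* \<or> (w, u) \<in> E\<^sup>*"
proof (induction a arbitrary: w rule: rtrancl_induct)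
  case (step b c)
  from step.prems show ?case
  proof (cases rule: rtranclE)
    case base
    then show ?thesis using step.hyps by (meson rtrancl.rtrancl_into_rtrancl)
  next
    case (step b')
    then have "b' = b" using parent_unique \<open>(b, c) \<in> E\<close> by blast
    then show ?thesis using step.IH step(1) by blast
  qed
qed simp

lemma children_r0: "children E r0 = {rho}"
proof -
  obtain c where c: "children E r0 = {c}" using card_children_r0 card_1_singletonE by blast
  then have "rho = c" unfolding root_rho_def children_def
    by (rule_tac the_equality) (auto simp: set_eq_iff)
  then show ?thesis using c by simp
qed

lemma r0_arc_rho: "(r0, rho) \<in> E"
  and arc_from_r0: "(r0, w) \<in> E \<Longrightarrow> w = rho"
  using children_r0 unfolding children_def by blast+

lemma rho_neq_r0: "rho \<noteq> r0"
  using r0_arc_rho no_arc_to_r0 by metis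

lemma rho_ancestor: "v \<in> V \<Longrightarrow> v \<noteq> r0 \<Longrightarrow> (rho, v) \<in> E\<^sup>*"
  using r0_reaches[of v] by (auto elim: converse_rtranclE dest: arc_from_r0)

lemma ancestor_of_rho: "(v, rho) \<in> E\<^sup>* \<Longrightarrow> v = rho \<or> v = r0"
  by (erule rtranclE) (use parent_unique r0_arc_rho ancestor_of_r0 in blast)+

lemma arc_head_inner: "(u, v) \<in> E \<Longrightarrow> u \<noteq> r0 \<Longrightarrow> v \<in> V - {r0, rho}"
  using arc_in_V no_arc_to_r0 parent_unique r0_arc_rho by blast

lemma lca_lowest_common_ancestor:
  assumes "A \<subseteq> V" "A \<noteq> {}"
  shows "lca V E A \<in> V \<and> (\<forall>a\<in>A. (lca V E A, a) \<in> E\<^sup>*) \<and>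
         (\<forall>w\<in>V. (\<forall>a\<in>A. (w, a) \<in> E\<^sup>*) \<longrightarrow> (w, lca V E A) \<in> E\<^sup>*)"
proof -
  define is_lca where "is_lca v \<longleftrightarrow> v \<in> V \<and> (\<forall>a\<in>A. anc_le E a v) \<and>
                   (\<forall>w\<in>V. (\<forall>a\<in>A. anc_le E a w) \<longrightarrow> anc_le E v w)" for v
  define C where "C = {v \<in> V. \<forall>a\<in>A. (v, a) \<in> E\<^sup>*}"
  have "r0 \<in> C" using r0_reaches r0_in_V assms by (auto simp: C_def)
  moreover have "wf ((E\<inverse>)\<^sup>+)"
  proof (rule wf_trancl, rule finite_acyclic_wf_converse)
    have "E \<subseteq> V \<times> V" using arc_in_V by auto
    then show "finite E" using finite_V by (simp add: finite_subset)
    show "acyclic E" unfolding acyclic_def using trancl_irrefl by blast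
  qed
  ultimately obtain m where m: "m \<in> C" "\<And>y. (y, m) \<in> (E\<inverse>)\<^sup>+ \<Longrightarrow> y \<notin> C"
    using wfE_min by metis
  obtain a0 where a0: "a0 \<in> A" using assms by blast
  have m_lowest: "(w, m) \<in> E\<^sup>*" if "w \<in> C" for w
  proof -
    have "(w, m) \<in> E\<^sup>* \<or> (m, w) \<in> E\<^sup>*"
      using that m(1) a0 ancestors_comparable unfolding C_def by blast
    moreover have "(m, w) \<notin> E\<^sup>+" using m(2) that by (auto simp: trancl_converse)
    ultimately show ?thesis by (metis rtrancl_eq_or_trancl)
  qed
  have "is_lca m" using m(1) m_lowest unfolding is_lca_def C_def anc_le_def by blast
  moreover have "v = m" if "is_lca v" for v
    using that \<open>is_lca m\<close> ancestor_antisym unfolding is_lca_def anc_le_def by blast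
  ultimately have "is_lca (lca V E A)" unfolding lca_def is_lca_def[symmetric] by (rule theI)
  then show ?thesis unfolding is_lca_def anc_le_def by blast
qed

lemma outgroup_lca:
  assumes "outgroup V E r0 A z" "A \<noteq> {}"
  shows "(\<forall>a\<in>A. (lca V E A, a) \<in> E\<^sup>*) \<and> (lca V E A, z) \<notin> E\<^sup>*"
proof -
  have leaves: "A \<subseteq> L" "z \<in> L" and higher: "anc_less E (lca V E A) (lca V E (A \<union> {z}))"
    using assms(1) unfolding outgroup_def by auto
  then have "A \<subseteq> V" "z \<in> V" using leavesD by blast+
  then have lca_A: "lca V E A \<in> V" "\<forall>a\<in>A. (lca V E A, a) \<in> E\<^sup>*"
    and lca_Az: "\<forall>w\<in>V. (\<forall>a\<in>A \<union> {z}. (w, a) \<in> E\<^sup>*) \<longrightarrow> (w, lca V E (A \<union> {z})) \<in> E\<^sup>*"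
    using lca_lowest_common_ancestor[of A] lca_lowest_common_ancestor[of "A \<union> {z}"] assms(2)
    by auto
  have "(lca V E A, z) \<notin> E\<^sup>*"
  proof
    assume "(lca V E A, z) \<in> E\<^sup>*"
    then have "(lca V E A, lca V E (A \<union> {z})) \<in> E\<^sup>*" using lca_A lca_Az by blast
    then show False
      using higher ancestor_antisym unfolding anc_less_def anc_le_def by blast
  qed
  then show ?thesis using lca_A by blast
qed

definition closer :: "'v \<Rightarrow> 'v \<Rightarrow> 'v \<Rightarrow> bool" where
  "closer x a b \<longleftrightarrow> (\<forall>v. (v, x) \<in> E\<^sup>* \<longrightarrow> (v, a) \<in> E\<^sup>* \<longrightarrow> (v, b) \<in> E\<^sup>*)"

lemma reflp_closer: "reflp (closer x)"
  and transp_closer: "transp (closer x)"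
  unfolding closer_def by (auto intro: reflpI transpI)

lemma totalp_closer: "totalp (closer x)"
proof (rule totalp_onI, rule ccontr)
  fix a b assume "\<not> (closer x a b \<or> closer x b a)"
  then obtain w v where w: "(w, x) \<in> E\<^sup>*" "(w, a) \<in> E\<^sup>*" "(w, b) \<notin> E\<^sup>*"
    and v: "(v, x) \<in> E\<^sup>*" "(v, b) \<in> E\<^sup>*" "(v, a) \<notin> E\<^sup>*"
    unfolding closer_def by blast
  have "(w, v) \<in> E\<^sup>* \<or> (v, w) \<in> E\<^sup>*" using ancestors_comparable w(1) v(1) by blast
  then show False using w v rtrancl_trans by metis
qed

lemma closer_iff_lca:
  assumes "x \<in> V" "a \<in> V" "b \<in> V"
  shows "closer x a b \<longleftrightarrow> anc_le E (lca V E {x, b}) (lca V E {x, a})"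
proof -
  have lca_xa: "lca V E {x, a} \<in> V" "(lca V E {x, a}, x) \<in> E\<^sup>*" "(lca V E {x, a}, a) \<in> E\<^sup>*"
    "\<And>w. w \<in> V \<Longrightarrow> (w, x) \<in> E\<^sup>* \<Longrightarrow> (w, a) \<in> E\<^sup>* \<Longrightarrow> (w, lca V E {x, a}) \<in> E\<^sup>*"
    using lca_lowest_common_ancestor[of "{x, a}"] assms by auto
  have lca_xb: "(lca V E {x, b}, b) \<in> E\<^sup>*"
    "\<And>w. w \<in> V \<Longrightarrow> (w, x) \<in> E\<^sup>* \<Longrightarrow> (w, b) \<in> E\<^sup>* \<Longrightarrow> (w, lca V E {x, b}) \<in> E\<^sup>*"
    using lca_lowest_common_ancestor[of "{x, b}"] assms by auto
  show ?thesis unfolding anc_le_def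
  proof
    assume "closer x a b"
    then have "(lca V E {x, a}, b) \<in> E\<^sup>*" using lca_xa(2,3) unfolding closer_def by blast
    then show "(lca V E {x, a}, lca V E {x, b}) \<in> E\<^sup>*" using lca_xb(2) lca_xa(1,2) by blast
  next
    assume below: "(lca V E {x, a}, lca V E {x, b}) \<in> E\<^sup>*"
    show "closer x a b" unfolding closer_def
    proof (intro allI impI)
      fix v assume "(v, x) \<in> E\<^sup>*" "(v, a) \<in> E\<^sup>*"
      then have "(v, lca V E {x, a}) \<in> E\<^sup>*" using lca_xa(4) ancestor_in_V assms(1) by blast
      then show "(v, b) \<in> E\<^sup>*" using below lca_xb(1) rtrancl_trans by metis
    qed
  qed
qed

lemma best_match_iff_closer:
  assumes "x \<in> L" "y \<in> L"
  shows "best_match V E r0 \<sigma> x y \<longleftrightarrow> (\<forall>y'\<in>L. \<sigma> y' = \<sigma> y \<longrightarrow> closer x y' y)"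
  using assms closer_iff_lca leavesD unfolding best_match_def by blast

lemma best_matches_eq_greatest:
  assumes "x \<in> L"
  shows "{y \<in> L. \<sigma> y = s \<and> best_match V E r0 \<sigma> x y} = greatest_elements (closer x) {y \<in> L. \<sigma> y = s}"
  using best_match_iff_closer[OF assms] unfolding greatest_elements_def by auto

subsection \<open>Edges of the unrooted tree and clusters\<close>

definition tree_edges :: "('v \<times> 'v) set" where
  "tree_edges = {(u, v). (u, v) \<in> E \<and> u \<noteq> r0} \<union> {(v, u). (u, v) \<in> E \<and> u \<noteq> r0}"

definition cuts_at :: "('v \<times> 'v) set \<Rightarrow> 'v \<Rightarrow> bool" where
  "cuts_at R v \<longleftrightarrow> (\<forall>p\<in>L. \<forall>q\<in>L. (p, q) \<in> R\<^sup>* \<longleftrightarrow> ((v, p) \<in> E\<^sup>* \<longleftrightarrow> (v, q) \<in> E\<^sup>*))"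

lemma cuts_atI:
  assumes "sym R"
    and closed: "\<And>a b. (a, b) \<in> R \<Longrightarrow> (v, a) \<in> E\<^sup>* \<Longrightarrow> (v, b) \<in> E\<^sup>*"
    and inside: "\<And>p. p \<in> L \<Longrightarrow> (v, p) \<in> E\<^sup>* \<Longrightarrow> (v, p) \<in> R\<^sup>*"
    and outside: "\<And>p. p \<in> L \<Longrightarrow> (v, p) \<notin> E\<^sup>* \<Longrightarrow> (w, p) \<in> R\<^sup>*"
  shows "cuts_at R v"
  unfolding cuts_at_def
proof (intro ballI)
  fix p q assume "p \<in> L" "q \<in> L"
  define D where "D = {u. (v, u) \<in> E\<^sup>*}"
  have "R `` D \<subseteq> D" using closed unfolding D_def by blast
  then have "(p, q) \<in> R\<^sup>* \<longleftrightarrow> (p \<in> D \<longleftrightarrow> q \<in> D)"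
    by (rule sym_rtrancl_iff_same_side[OF \<open>sym R\<close>])
      (use inside outside \<open>p \<in> L\<close> \<open>q \<in> L\<close> in \<open>auto simp: D_def\<close>)
  then show "(p, q) \<in> R\<^sup>* \<longleftrightarrow> ((v, p) \<in> E\<^sup>* \<longleftrightarrow> (v, q) \<in> E\<^sup>*)" by (simp add: D_def)
qed

lemma tree_edge_stays_below:
  assumes "(u, v) \<in> E" "(a, b) \<in> tree_edges" "(a, b) \<noteq> (v, u)" "(v, a) \<in> E\<^sup>*"
  shows "(v, b) \<in> E\<^sup>*"
proof (cases "(a, b) \<in> E")
  case True
  then show ?thesis using assms(4) by (meson rtrancl.rtrancl_into_rtrancl)
next
  case False
  then have ba: "(b, a) \<in> E" using assms(2) by (auto simp: tree_edges_def)
  show ?thesis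
  proof (cases "a = v")
    case True
    then show ?thesis using parent_unique ba assms(1,3) by blast
  next
    case False
    then obtain a' where "(v, a') \<in> E\<^sup>*" "(a', a) \<in> E" using assms(4) by (auto elim: rtranclE)
    then show ?thesis using parent_unique ba by blast
  qed
qed

lemma tbar_edges_unsuppressed: "card (children E rho) \<noteq> 2 \<Longrightarrow> tbar_edges E r0 = tree_edges"
  unfolding tbar_edges_def Let_def tree_edges_def by simp

lemma cuts_at_remove_arc:
  assumes "card (children E rho) \<noteq> 2" and uv: "(u, v) \<in> E" "u \<noteq> r0"
  shows "cuts_at (tbar_edges E r0 - {(u, v), (v, u)}) v"
  unfolding tbar_edges_unsuppressed[OF assms(1)]
proof (rule cuts_atI[where w = rho])
  show "sym (tree_edges - {(u, v), (v, u)})" by (auto simp: tree_edges_def sym_def)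
next
  fix a b assume "(a, b) \<in> tree_edges - {(u, v), (v, u)}" "(v, a) \<in> E\<^sup>*"
  then show "(v, b) \<in> E\<^sup>*" using tree_edge_stays_below[OF uv(1)] by blast
next
  fix p assume "p \<in> L" "(v, p) \<in> E\<^sup>*"
  show "(v, p) \<in> (tree_edges - {(u, v), (v, u)})\<^sup>*"
  proof (rule rtrancl_lift_path[OF \<open>(v, p) \<in> E\<^sup>*\<close>])
    fix w1 w2 assume w: "(v, w1) \<in> E\<^sup>*" "(w1, w2) \<in> E"
    have "w1 \<noteq> r0" using w(1) ancestor_of_r0 uv no_arc_to_r0 by metis
    moreover have "w1 \<noteq> u" using w(1) uv(1) arc_not_ancestor by blast
    moreover have "(w1, w2) \<noteq> (v, u)" using w(2) uv(1) arc_not_ancestor by blast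
    ultimately show "(w1, w2) \<in> tree_edges - {(u, v), (v, u)}"
      using w(2) unfolding tree_edges_def by auto
  qed
next
  fix p assume "p \<in> L" "(v, p) \<notin> E\<^sup>*"
  show "(rho, p) \<in> (tree_edges - {(u, v), (v, u)})\<^sup>*"
  proof (rule rtrancl_lift_path)
    show "(rho, p) \<in> E\<^sup>*" using rho_ancestor leavesD \<open>p \<in> L\<close> by blast
  next
    fix w1 w2 assume "(rho, w1) \<in> E\<^sup>*" "(w1, w2) \<in> E" "(w2, p) \<in> E\<^sup>*"
    moreover have "w1 \<noteq> r0" using \<open>(rho, w1) \<in> E\<^sup>*\<close> ancestor_of_r0 rho_neq_r0 by blast
    moreover have "w2 \<noteq> v" "w1 \<noteq> v"
      using \<open>(v, p) \<notin> E\<^sup>*\<close> \<open>(w1, w2) \<in> E\<close> \<open>(w2, p) \<in> E\<^sup>*\<close>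
      by (auto intro: converse_rtrancl_into_rtrancl)
    ultimately show "(w1, w2) \<in> tree_edges - {(u, v), (v, u)}" unfolding tree_edges_def by auto
  qed
qed

context
  fixes c1 c2 :: 'v
  assumes root_children: "children E rho = {c1, c2}" and distinct: "c1 \<noteq> c2"
begin

lemma tbar_edges_suppressed:
  "tbar_edges E r0 = {(a, b) \<in> tree_edges. a \<noteq> rho \<and> b \<noteq> rho} \<union> {(c1, c2), (c2, c1)}"
  using root_children distinct
  unfolding tbar_edges_def Let_def tree_edges_def by auto

lemma root_child_arc: "c \<in> {c1, c2} \<Longrightarrow> (rho, c) \<in> E"
  using root_children unfolding children_def by blast

lemma path_below_root_child:
  assumes "c \<in> {c1, c2}" "(c, w1) \<in> E\<^sup>*" "(w1, w2) \<in> E"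
  shows "(w1, w2) \<in> tree_edges \<and> w1 \<noteq> rho \<and> w2 \<noteq> rho \<and> w2 \<notin> {c1, c2}"
proof -
  have rho_c: "(rho, c) \<in> E" using root_child_arc assms(1) .
  have "(c, w2) \<in> E\<^sup>*" using assms(2,3) by (rule rtrancl_into_rtrancl)
  then have "w1 \<noteq> r0" "w1 \<noteq> rho" "w2 \<noteq> rho"
    using rho_c assms(2) ancestor_of_r0 no_arc_to_r0 arc_not_ancestor by metis+
  moreover have "w2 \<notin> {c1, c2}" using root_child_arc parent_unique assms(3) \<open>w1 \<noteq> rho\<close> by blast
  ultimately show ?thesis using assms(3) unfolding tree_edges_def by blast
qed

lemma leaf_below_root_child:
  assumes "p \<in> L"
  shows "(c1, p) \<in> E\<^sup>* \<or> (c2, p) \<in> E\<^sup>*"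
proof -
  have "(rho, p) \<in> E\<^sup>*" "p \<noteq> rho" using rho_ancestor leavesD assms root_child_arc by blast+
  then obtain c where "(rho, c) \<in> E" "(c, p) \<in> E\<^sup>*" by (auto elim: converse_rtranclE)
  moreover from this have "c \<in> {c1, c2}" using root_children unfolding children_def by blast
  ultimately show ?thesis by blast
qed

lemma arc_head_not_above_root:
  assumes "(u, v) \<in> E" "u \<noteq> r0" "u \<noteq> rho" "c \<in> {rho, c1, c2}"
  shows "(v, c) \<notin> E\<^sup>*"
proof
  assume "(v, c) \<in> E\<^sup>*"
  have not_above_rho: "(v, rho) \<notin> E\<^sup>*" using ancestor_of_rho arc_head_inner assms(1,2) by blast
  show False
  proof (cases "c = rho")
    case True
    then show False using not_above_rho \<open>(v, c) \<in> E\<^sup>*\<close> by blast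
  next
    case False
    then have c: "c \<in> {c1, c2}" using assms(4) by blast
    then have "v \<noteq> c" using assms(1,3) parent_unique root_child_arc by blast
    then obtain w where "(v, w) \<in> E\<^sup>*" "(w, c) \<in> E" using \<open>(v, c) \<in> E\<^sup>*\<close> by (auto elim: rtranclE)
    moreover from this(2) have "w = rho" using root_child_arc[OF c] parent_unique by blast
    ultimately show False using not_above_rho by blast
  qed
qed

lemma cuts_at_remove_arc_suppressed:
  assumes uv: "(u, v) \<in> E" "u \<noteq> r0" "u \<noteq> rho"
  shows "cuts_at (tbar_edges E r0 - {(u, v), (v, u)}) v"
proof -
  let ?R = "tbar_edges E r0 - {(u, v), (v, u)}"
  have v_inner: "v \<in> V - {r0, rho}" using arc_head_inner uv by blast
  have not_above_rho: "(v, rho) \<notin> E\<^sup>*"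
    and not_above_root_child: "\<And>c. c \<in> {c1, c2} \<Longrightarrow> (v, c) \<notin> E\<^sup>*"
    using arc_head_not_above_root[OF uv] by blast+
  have lift: "(w1, w2) \<in> ?R" if "(w1, w2) \<in> tree_edges" "w1 \<noteq> rho" "w2 \<noteq> rho"
    "(w1, w2) \<noteq> (u, v)" "(w1, w2) \<noteq> (v, u)" for w1 w2
    using that unfolding tbar_edges_suppressed by blast
  show ?thesis
  proof (rule cuts_atI[where w = c1])
    show "sym ?R" unfolding tbar_edges_suppressed by (auto simp: tree_edges_def sym_def)
  next
    fix a b assume ab: "(a, b) \<in> ?R" and "(v, a) \<in> E\<^sup>*"
    then have "a \<notin> {c1, c2}" using not_above_root_child by blast
    then have "(a, b) \<in> tree_edges" "(a, b) \<noteq> (v, u)" using ab unfolding tbar_edges_suppressed by auto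
    then show "(v, b) \<in> E\<^sup>*" using tree_edge_stays_below[OF uv(1)] \<open>(v, a) \<in> E\<^sup>*\<close> by blast
  next
    fix p assume "p \<in> L" "(v, p) \<in> E\<^sup>*"
    show "(v, p) \<in> ?R\<^sup>*"
    proof (rule rtrancl_lift_path[OF \<open>(v, p) \<in> E\<^sup>*\<close>])
      fix w1 w2 assume w: "(v, w1) \<in> E\<^sup>*" "(w1, w2) \<in> E"
      have "(v, w2) \<in> E\<^sup>*" using w by (rule rtrancl_into_rtrancl)
      then have "w1 \<noteq> rho" "w2 \<noteq> rho" using w(1) not_above_rho by auto
      moreover have "w1 \<noteq> r0" using w(1) ancestor_of_r0 v_inner by blast
      moreover have "w1 \<noteq> u" using w(1) uv(1) arc_not_ancestor by blast
      moreover have "(w1, w2) \<noteq> (v, u)" using w(2) uv(1) arc_not_ancestor by blast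
      ultimately show "(w1, w2) \<in> ?R" using lift w(2) unfolding tree_edges_def by blast
    qed
  next
    fix p assume "p \<in> L" "(v, p) \<notin> E\<^sup>*"
    have from_child: "(c, p) \<in> ?R\<^sup>*" if "c \<in> {c1, c2}" "(c, p) \<in> E\<^sup>*" for c
    proof (rule rtrancl_lift_path[OF that(2)])
      fix w1 w2 assume w: "(c, w1) \<in> E\<^sup>*" "(w1, w2) \<in> E" "(w2, p) \<in> E\<^sup>*"
      have "w2 \<noteq> v" "w1 \<noteq> v"
        using \<open>(v, p) \<notin> E\<^sup>*\<close> w(2,3) by (auto intro: converse_rtrancl_into_rtrancl)
      then show "(w1, w2) \<in> ?R" using lift path_below_root_child[OF that(1) w(1,2)] by blast
    qed
    have "(c1, c2) \<in> ?R"
    proof -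
      have "v \<noteq> c1" using not_above_root_child by blast
      moreover have "(u, v) \<noteq> (c1, c2)" using uv(3) parent_unique root_child_arc uv(1) by blast
      ultimately show ?thesis unfolding tbar_edges_suppressed by blast
    qed
    moreover have "(c1, p) \<in> E\<^sup>* \<or> (c2, p) \<in> E\<^sup>*" using leaf_below_root_child \<open>p \<in> L\<close> .
    ultimately show "(c1, p) \<in> ?R\<^sup>*" using from_child by (blast intro: converse_rtrancl_into_rtrancl)
  qed
qed

lemma cuts_at_remove_root_edge: "cuts_at (tbar_edges E r0 - {(c1, c2), (c2, c1)}) c1"
proof -
  let ?R = "tbar_edges E r0 - {(c1, c2), (c2, c1)}"
  have from_child: "(c, p) \<in> ?R\<^sup>*" if "c \<in> {c1, c2}" "(c, p) \<in> E\<^sup>*" for c p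
  proof (rule rtrancl_lift_path[OF that(2)])
    fix w1 w2 assume "(c, w1) \<in> E\<^sup>*" "(w1, w2) \<in> E"
    then show "(w1, w2) \<in> ?R"
      using path_below_root_child[OF that(1)] unfolding tbar_edges_suppressed by blast
  qed
  show ?thesis
  proof (rule cuts_atI[where w = c2])
    show "sym ?R" unfolding tbar_edges_suppressed by (auto simp: tree_edges_def sym_def)
  next
    fix a b assume "(a, b) \<in> ?R" "(c1, a) \<in> E\<^sup>*"
    then show "(c1, b) \<in> E\<^sup>*"
      using tree_edge_stays_below[OF root_child_arc] unfolding tbar_edges_suppressed by blast
  next
    fix p assume "p \<in> L" "(c1, p) \<in> E\<^sup>*"
    then show "(c1, p) \<in> ?R\<^sup>*" using from_child by blast
  next
    fix p assume "p \<in> L" "(c1, p) \<notin> E\<^sup>*"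
    then show "(c2, p) \<in> ?R\<^sup>*" using from_child leaf_below_root_child by blast
  qed
qed

lemma tbar_edge_cuts_at_suppressed:
  assumes "(a, b) \<in> tbar_edges E r0"
  shows "\<exists>v\<in>V - {r0, rho}. cuts_at (tbar_edges E r0 - {(a, b), (b, a)}) v"
proof -
  have swap: "{(b, a), (a, b)} = {(a, b), (b, a)}" by blast
  from assms consider "(a, b) \<in> E" "a \<noteq> r0" "a \<noteq> rho" | "(b, a) \<in> E" "b \<noteq> r0" "b \<noteq> rho"
    | "{(a, b), (b, a)} = {(c1, c2), (c2, c1)}"
    unfolding tbar_edges_suppressed tree_edges_def by auto
  then show ?thesis
  proof cases
    case 1
    then show ?thesis using cuts_at_remove_arc_suppressed[OF 1] arc_head_inner[OF 1(1,2)] by blast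
  next
    case 2
    then show ?thesis using cuts_at_remove_arc_suppressed[OF 2] arc_head_inner[OF 2(1,2)] swap by auto
  next
    case 3
    have "c1 \<in> V - {r0, rho}" using root_child_arc arc_head_inner rho_neq_r0 by blast
    then show ?thesis using cuts_at_remove_root_edge 3 by auto
  qed
qed

end

lemma tbar_edge_cuts_at:
  assumes "e \<in> tbar_edges E r0"
  shows "\<exists>v\<in>V - {r0, rho}. cuts_at (tbar_edges E r0 - {e, (snd e, fst e)}) v"
proof -
  obtain a b where e: "e = (a, b)" by fastforce
  have swap: "{(b, a), (a, b)} = {(a, b), (b, a)}" by blast
  show ?thesis
  proof (cases "card (children E rho) = 2")
    case True
    then obtain c1 c2 where ch: "children E rho = {c1, c2}" "c1 \<noteq> c2" by (meson card_2_iff)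
    then show ?thesis using tbar_edge_cuts_at_suppressed assms e by simp
  next
    case False
    from assms consider "(a, b) \<in> E" "a \<noteq> r0" | "(b, a) \<in> E" "b \<noteq> r0"
      using e unfolding tbar_edges_unsuppressed[OF False] tree_edges_def by blast
    then show ?thesis
    proof cases
      case 1
      then show ?thesis using cuts_at_remove_arc[OF False 1] arc_head_inner[OF 1] e by auto
    next
      case 2
      then show ?thesis using cuts_at_remove_arc[OF False 2] arc_head_inner[OF 2] e swap by auto
    qed
  qed
qed

lemma inner_vertex_cut_by_tbar_edge:
  assumes "v \<in> V - {r0, rho}"
  shows "\<exists>e\<in>tbar_edges E r0. cuts_at (tbar_edges E r0 - {e, (snd e, fst e)}) v"
proof -
  obtain u where uv: "(u, v) \<in> E" using unique_parent assms by blast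
  have "u \<noteq> r0" using arc_from_r0 uv assms by blast
  have arc_case: "(u, v) \<in> tbar_edges E r0 \<and> cuts_at (tbar_edges E r0 - {(u, v), (v, u)}) v
    \<Longrightarrow> ?thesis"
    by (intro bexI[where x = "(u, v)"]) auto
  show ?thesis
  proof (cases "card (children E rho) = 2")
    case True
    then obtain c1 c2 where ch: "children E rho = {c1, c2}" "c1 \<noteq> c2" by (meson card_2_iff)
    show ?thesis
    proof (cases "u = rho")
      case True
      then have "v \<in> {c1, c2}" using uv ch(1) unfolding children_def by blast
      define c where "c = (if v = c1 then c2 else c1)"
      have ch': "children E rho = {v, c}" "v \<noteq> c"
        using ch \<open>v \<in> {c1, c2}\<close> unfolding c_def by auto
      have "(v, c) \<in> tbar_edges E r0" unfolding tbar_edges_suppressed[OF ch'] by blast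
      with cuts_at_remove_root_edge[OF ch'] show ?thesis
        by (intro bexI[where x = "(v, c)"]) auto
    next
      case False
      have "(u, v) \<in> tbar_edges E r0"
        using uv \<open>u \<noteq> r0\<close> False assms unfolding tbar_edges_suppressed[OF ch] tree_edges_def by blast
      then show ?thesis using arc_case cuts_at_remove_arc_suppressed[OF ch uv \<open>u \<noteq> r0\<close> False] by blast
    qed
  next
    case False
    have "(u, v) \<in> tbar_edges E r0"
      using uv \<open>u \<noteq> r0\<close> unfolding tbar_edges_unsuppressed[OF False] tree_edges_def by blast
    then show ?thesis using arc_case cuts_at_remove_arc[OF False uv \<open>u \<noteq> r0\<close>] by blast
  qed
qed

definition cluster_splits :: "'v \<Rightarrow> 'v \<Rightarrow> 'v \<Rightarrow> 'v \<Rightarrow> 'v \<Rightarrow> bool" where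
  "cluster_splits v p q r s \<longleftrightarrow>
     ((v, p) \<in> E\<^sup>* \<longleftrightarrow> (v, q) \<in> E\<^sup>*) \<and> ((v, r) \<in> E\<^sup>* \<longleftrightarrow> (v, s) \<in> E\<^sup>*) \<and> ((v, p) \<in> E\<^sup>* \<longleftrightarrow> (v, r) \<notin> E\<^sup>*)"

lemma separates_iff_cluster_splits:
  assumes "cuts_at (tbar_edges E r0 - {e, (snd e, fst e)}) v" "e \<in> tbar_edges E r0"
    and "p \<in> L" "q \<in> L" "r \<in> L" "s \<in> L"
  shows "separates (tbar_edges E r0) e p q r s \<longleftrightarrow> cluster_splits v p q r s"
proof -
  have "(a, b) \<in> (tbar_edges E r0 - {e, (snd e, fst e)})\<^sup>* \<longleftrightarrow> ((v, a) \<in> E\<^sup>* \<longleftrightarrow> (v, b) \<in> E\<^sup>*)"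
    if "a \<in> L" "b \<in> L" for a b
    using assms(1) that unfolding cuts_at_def by blast
  then show ?thesis
    using assms(2-6) unfolding separates_def cluster_splits_def Let_def by simp
qed

lemma quartet_iff_cluster_splits:
  assumes "p \<in> L" "q \<in> L" "r \<in> L" "s \<in> L"
  shows "quartet E r0 p q r s \<longleftrightarrow> (\<exists>v\<in>V - {r0, rho}. cluster_splits v p q r s)"
proof
  assume "quartet E r0 p q r s"
  then obtain e where "separates (tbar_edges E r0) e p q r s" unfolding quartet_def by blast
  moreover from this have "e \<in> tbar_edges E r0" unfolding separates_def by blast
  ultimately show "\<exists>v\<in>V - {r0, rho}. cluster_splits v p q r s"
    using tbar_edge_cuts_at separates_iff_cluster_splits assms by blast
next
  assume "\<exists>v\<in>V - {r0, rho}. cluster_splits v p q r s"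
  then show "quartet E r0 p q r s"
    using inner_vertex_cut_by_tbar_edge separates_iff_cluster_splits assms
    unfolding quartet_def by blast
qed

subsection \<open>Quartets with an outgroup\<close>

lemma quartet_outgroup_iff_not_closer:
  assumes leaves: "x \<in> L" "a \<in> L" "b \<in> L" "z \<in> L"
    and u: "(u, x) \<in> E\<^sup>*" "(u, b) \<in> E\<^sup>*" "(u, z) \<notin> E\<^sup>*"
  shows "quartet E r0 x a b z \<longleftrightarrow> \<not> closer x a b"
proof
  assume "quartet E r0 x a b z"
  then obtain v where v: "cluster_splits v x a b z"
    using quartet_iff_cluster_splits[OF leaves] by blast
  show "\<not> closer x a b"
  proof
    assume closer: "closer x a b"
    show False
    proof (cases "(v, x) \<in> E\<^sup>*")
      case True
      then show False using v closer unfolding cluster_splits_def closer_def by blast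
    next
      case False
      then have "(v, b) \<in> E\<^sup>*" "(v, z) \<in> E\<^sup>*" using v unfolding cluster_splits_def by blast+
      then have "(v, u) \<in> E\<^sup>* \<or> (u, v) \<in> E\<^sup>*" using ancestors_comparable u(2) by blast
      then show False using False \<open>(v, z) \<in> E\<^sup>*\<close> u(1,3) rtrancl_trans by metis
    qed
  qed
next
  assume "\<not> closer x a b"
  then obtain w where w: "(w, x) \<in> E\<^sup>*" "(w, a) \<in> E\<^sup>*" "(w, b) \<notin> E\<^sup>*"
    unfolding closer_def by blast
  have "w \<in> V - {r0, rho}"
    using ancestor_in_V w leavesD leaves(1,3) r0_reaches rho_ancestor by blast
  moreover have "(w, z) \<notin> E\<^sup>*"
  proof
    assume "(w, z) \<in> E\<^sup>*"
    have "(w, u) \<in> E\<^sup>* \<or> (u, w) \<in> E\<^sup>*" using ancestors_comparable u(1) w(1) by blast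
    then show False using \<open>(w, z) \<in> E\<^sup>*\<close> w(3) u(2,3) rtrancl_trans by metis
  qed
  ultimately show "quartet E r0 x a b z"
    using quartet_iff_cluster_splits[OF leaves] w unfolding cluster_splits_def by blast
qed

lemma quartet_outgroup_pair_imp_closer:
  assumes leaves: "x \<in> L" "a \<in> L" "b \<in> L" "z \<in> L"
    and u: "(u, x) \<in> E\<^sup>*" "(u, a) \<in> E\<^sup>*" "(u, z) \<notin> E\<^sup>*"
    and "quartet E r0 x z a b"
  shows "closer x a b"
proof (rule ccontr)
  assume "\<not> closer x a b"
  then obtain w where w: "(w, x) \<in> E\<^sup>*" "(w, a) \<in> E\<^sup>*" "(w, b) \<notin> E\<^sup>*"
    unfolding closer_def by blast
  obtain v where v: "cluster_splits v x z a b"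
    using quartet_iff_cluster_splits[OF leaves(1,4,2,3)] \<open>quartet E r0 x z a b\<close> by blast
  show False
  proof (cases "(v, x) \<in> E\<^sup>*")
    case True
    then have "(v, z) \<in> E\<^sup>*" "(v, a) \<notin> E\<^sup>*" using v unfolding cluster_splits_def by blast+
    moreover have "(v, u) \<in> E\<^sup>* \<or> (u, v) \<in> E\<^sup>*" using ancestors_comparable u(1) True by blast
    ultimately show False using u rtrancl_trans by metis
  next
    case False
    then have "(v, a) \<in> E\<^sup>*" "(v, b) \<in> E\<^sup>*" using v unfolding cluster_splits_def by blast+
    moreover have "(v, w) \<in> E\<^sup>* \<or> (w, v) \<in> E\<^sup>*" using ancestors_comparable w(2) calculation(1) by blast
    ultimately show False using False w rtrancl_trans by metis
  qed
qed

lemma gamma_arc_iff_closer: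
  assumes leaves: "x \<in> L" "a \<in> L" "b \<in> L" "z \<in> L"
    and u: "(u, x) \<in> E\<^sup>*" "(u, a) \<in> E\<^sup>*" "(u, b) \<in> E\<^sup>*" "(u, z) \<notin> E\<^sup>*"
  shows "(quartet E r0 x z a b \<or> quartet_star E r0 x a b z \<or> quartet E r0 x b a z) \<longleftrightarrow> closer x a b"
proof -
  have "quartet E r0 x a b z \<longleftrightarrow> \<not> closer x a b"
    using quartet_outgroup_iff_not_closer[OF leaves u(1,3,4)] .
  moreover have "quartet E r0 x b a z \<longleftrightarrow> \<not> closer x b a"
    using quartet_outgroup_iff_not_closer[OF leaves(1,3,2,4) u(1,2,4)] .
  moreover have "quartet E r0 x z a b \<Longrightarrow> closer x a b"
    using quartet_outgroup_pair_imp_closer[OF leaves u(1,2,4)] .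
  moreover have "closer x a b \<or> closer x b a"
    using totalp_reflp_cases[OF reflp_closer totalp_closer] .
  ultimately show ?thesis unfolding quartet_star_def by blast
qed

lemma gamma_arcs_eq_closer:
  assumes "x \<in> L" "Y \<subseteq> L"
    and outgroup: "\<And>a b. a \<in> Y \<Longrightarrow> b \<in> Y \<Longrightarrow> a \<noteq> b \<Longrightarrow> outgroup V E r0 (Y \<union> {x}) (ch a b)"
  shows "gamma_arcs E r0 x Y ch = {(a, b). a \<in> Y \<and> b \<in> Y \<and> a \<noteq> b \<and> closer x a b}"
proof -
  let ?u = "lca V E (Y \<union> {x})"
  have "(quartet E r0 x (ch a b) a b \<or> quartet_star E r0 x a b (ch a b) \<or> quartet E r0 x b a (ch a b))
        \<longleftrightarrow> closer x a b" if "a \<in> Y" "b \<in> Y" "a \<noteq> b" for a b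
  proof -
    have "ch a b \<in> L" "\<forall>y\<in>Y \<union> {x}. (?u, y) \<in> E\<^sup>*" "(?u, ch a b) \<notin> E\<^sup>*"
      using outgroup[OF that] outgroup_lca[OF outgroup[OF that]] unfolding outgroup_def by auto
    then show ?thesis using gamma_arc_iff_closer[of x a b "ch a b" ?u] assms(1,2) that by blast
  qed
  then show ?thesis unfolding gamma_arcs_def by blast
qed

end

theorem theorem1:
  fixes V :: "'v set" and E :: "('v \<times> 'v) set" and r0 :: 'v
    and \<sigma> :: "'v \<Rightarrow> 's" and S :: "'s set"
    and x :: 'v and s :: 's and Y Z :: "'v set" and ch :: "'v \<Rightarrow> 'v \<Rightarrow> 'v"
  assumes T: "planted_phylo_tree V E r0"
    and sigma: "\<sigma> ` leaves V E r0 = S"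
    and x: "x \<in> leaves V E r0"
    and s: "s \<in> S" "s \<noteq> \<sigma> x"
    and Y_sub: "Y \<subseteq> {y \<in> leaves V E r0. \<sigma> y = s}"
    and Y_bm: "{y \<in> leaves V E r0. \<sigma> y = s \<and> best_match V E r0 \<sigma> x y} \<subseteq> Y"
    and Z: "Z \<subseteq> leaves V E r0" "Z \<noteq> {}"
    and Z_out: "\<forall>z\<in>Z. outgroup V E r0 (Y \<union> {x}) z"
    and ch_in: "\<forall>y'\<in>Y. \<forall>y''\<in>Y. y' \<noteq> y'' \<longrightarrow> ch y' y'' \<in> Z"
    and ch_sym: "\<forall>y'\<in>Y. \<forall>y''\<in>Y. ch y' y'' = ch y'' y'"
  shows "(\<exists>!B. is_scc Y (gamma_arcs E r0 x Y ch) B \<and> \<not> has_out_edge (gamma_arcs E r0 x Y ch) B)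
         \<and> (\<forall>B. is_scc Y (gamma_arcs E r0 x Y ch) B \<and> \<not> has_out_edge (gamma_arcs E r0 x Y ch) B
              \<longrightarrow> B = {y \<in> leaves V E r0. \<sigma> y = s \<and> best_match V E r0 \<sigma> x y})"
proof -
  interpret planted_tree V E r0 by (rule planted_tree.intro) (fact T)
  let ?Ls = "{y \<in> L. \<sigma> y = s}"
  note closer = reflp_closer[of x] transp_closer[of x] totalp_closer[of x]
  have "finite ?Ls" using finite_V leavesD by (auto intro: finite_subset)
  moreover have "?Ls \<noteq> {}" using s(1) unfolding sigma[symmetric] by blast
  ultimately have nonempty: "greatest_elements (closer x) ?Ls \<noteq> {}"
    by (rule greatest_elements_nonempty[OF _ _ closer])
  have best_matches: "greatest_elements (closer x) ?Ls \<subseteq> Y"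
    using Y_bm unfolding best_matches_eq_greatest[OF x] .
  have best_matches_eq: "greatest_elements (closer x) Y = {y \<in> L. \<sigma> y = s \<and> best_match V E r0 \<sigma> x y}"
    unfolding best_matches_eq_greatest[OF x]
    by (rule greatest_elements_subset_eq[OF closer(2) best_matches Y_sub nonempty])
  have "finite Y" using Y_sub \<open>finite ?Ls\<close> by (rule finite_subset)
  moreover have "Y \<noteq> {}" using best_matches nonempty by blast
  moreover have "gamma_arcs E r0 x Y ch = {(a, b). a \<in> Y \<and> b \<in> Y \<and> a \<noteq> b \<and> closer x a b}"
    by (rule gamma_arcs_eq_closer[OF x]) (use Y_sub Z_out ch_in in auto)
  ultimately show ?thesis
    by (rule unique_sink_scc_total_preorder[where Y = Y, OF _ _ closer, unfolded best_matches_eq])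
qed

end
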